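(* Let $U$ be a commutative supertropical semiring, $M:=eU$, $\gamma:M\to N$ a surjective homomorphism onto a bipotent semiring $N$, $V:=U/F(U,\gamma)$, and $\alpha:=\sigma_V\circ\pi_{F(U,\gamma)}:U\to\hat V$ (the initial transmission from $U$ to a supertropical semiring covering $\gamma$). Then for $x_1,x_2\in U$ we have $\alpha(x_1)=\alpha(x_2)$ if and only if either $x_1=x_2$, or $x_1,x_2\in D(U,\gamma)$ and $\gamma(ex_1)=\gamma(ex_2)$, or $\gamma(ex_1)=\gamma(ex_2)=0$.
   Context: All monoids are commutative. A supertropical monoid is a monoid $(U,\cdot)$ with absorbing element $0$ and distinguished idempotent $e$ with $ex=0\Rightarrow x=0$, together with a total ordering on $M:=eU$, compatible with multiplication and with $0$ least, making $M$ a bipotent semiring (addition $=\max$). A supertropical semiring is a supertropical monoid for which the addition $x+y:=y$ if $ex<ey$, $x$ if $ex>ey$, $ex$ if $ex=ey$ is associative and distributive. For a TE-relation $E$, $U/E$ carries the unique supertropical monoid structure making $\pi_E$ a transmission (multiplicative map preserving $0,1,e$ and order on ghosts). $F(U,\gamma)$: $x\sim y$ iff $x=y$, or $x,y\in M$ with $\gamma(x)=\gamma(y)$, or $\gamma(ex)=\gamma(ey)=0$; ghost ideal of $U/F(U,\gamma)$ identified with $N$. For a supertropical monoid $V$ with ghost ideal $N$: $D(V):=N\cup\{yz: y,z\in V,\ \exists y'\in N,\ y'<ey,\ y'z=eyz\}$; $\hat V:=V/E(V,D(V))$ where $x\sim y$ iff $x=y$ or ($x,y\in D(V)$, $ex=ey$);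 $\sigma_V$ the projection. A $\gamma$-NC-product in $U$ is an element $x=yz$ with $y,z\in U$ such that some $y'\in M$ satisfies $\gamma(y')<\gamma(ey)$ and $\gamma(y'z)=\gamma(eyz)$; $D(U,\gamma):=M\cup\{\gamma\text{-NC-products}\}$. *)

theory Defs
  imports Main
begin

text \<open>A (commutative) monoid with absorbing zero and distinguished idempotent e,
  together with an order on the ghost ideal M = eU.\<close>
record 'a stmon =
  car   :: "'a set"
  smul  :: "'a \<Rightarrow> 'a \<Rightarrow> 'a"
  sone  :: 'a
  szero :: 'a
  se    :: 'a
  sgle  :: "'a \<Rightarrow> 'a \<Rightarrow> bool"

definition ghosts :: "('a, 'b) stmon_scheme \<Rightarrow> 'a set" where
  "ghosts U = {smul U (se U) x | x. x \<in> car U}"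

definition sgless :: "('a, 'b) stmon_scheme \<Rightarrow> 'a \<Rightarrow> 'a \<Rightarrow> bool" where
  "sgless U x y \<longleftrightarrow> sgle U x y \<and> x \<noteq> y"

definition supertropical_monoid :: "('a, 'b) stmon_scheme \<Rightarrow> bool" where
  "supertropical_monoid U \<longleftrightarrow>
     sone U \<in> car U \<and> szero U \<in> car U \<and> se U \<in> car U \<and>
     (\<forall>x\<in>car U. \<forall>y\<in>car U. smul U x y \<in> car U) \<and>
     (\<forall>x\<in>car U. \<forall>y\<in>car U. \<forall>z\<in>car U. smul U (smul U x y) z = smul U x (smul U y z)) \<and>
     (\<forall>x\<in>car U. \<forall>y\<in>car U. smul U x y = smul U y x) \<and>
     (\<forall>x\<in>car U. smul U (sone U) x = x) \<and>
     (\<forall>x\<in>car U. smul U (szero U) x = szero U) \<and>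
     smul U (se U) (se U) = se U \<and>
     (\<forall>x\<in>car U. smul U (se U) x = szero U \<longrightarrow> x = szero U) \<and>
     \<comment> \<open>total ordering on M = eU\<close>
     (\<forall>x\<in>ghosts U. sgle U x x) \<and>
     (\<forall>x\<in>ghosts U. \<forall>y\<in>ghosts U. sgle U x y \<longrightarrow> sgle U y x \<longrightarrow> x = y) \<and>
     (\<forall>x\<in>ghosts U. \<forall>y\<in>ghosts U. \<forall>z\<in>ghosts U. sgle U x y \<longrightarrow> sgle U y z \<longrightarrow> sgle U x z) \<and>
     (\<forall>x\<in>ghosts U. \<forall>y\<in>ghosts U. sgle U x y \<or> sgle U y x) \<and>
     \<comment> \<open>compatible with multiplication, 0 least (so M is bipotent with + = max)\<close>
     (\<forall>x\<in>ghosts U. \<forall>y\<in>ghosts U. \<forall>z\<in>ghosts U. sgle U x y \<longrightarrow> sgle U (smul U x z) (smul U y z)) \<and>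
     (\<forall>x\<in>ghosts U. sgle U (szero U) x)"

text \<open>The supertropical addition determined by the monoid structure.\<close>
definition st_add :: "('a, 'b) stmon_scheme \<Rightarrow> 'a \<Rightarrow> 'a \<Rightarrow> 'a" where
  "st_add U x y =
     (if sgless U (smul U (se U) x) (smul U (se U) y) then y
      else if sgless U (smul U (se U) y) (smul U (se U) x) then x
      else smul U (se U) x)"

definition supertropical_semiring :: "('a, 'b) stmon_scheme \<Rightarrow> bool" where
  "supertropical_semiring U \<longleftrightarrow> supertropical_monoid U \<and>
     (\<forall>x\<in>car U. \<forall>y\<in>car U. \<forall>z\<in>car U. st_add U (st_add U x y) z = st_add U x (st_add U y z)) \<and>
     (\<forall>x\<in>car U. \<forall>y\<in>car U. \<forall>z\<in>car U. smul U x (st_add U y z) = st_add U (smul U x y) (smul U x z))"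

definition gmax :: "('a, 'b) stmon_scheme \<Rightarrow> 'a \<Rightarrow> 'a \<Rightarrow> 'a" where
  "gmax U x y = (if sgle U x y then y else x)"

record 'b bsr =
  bcar  :: "'b set"
  badd  :: "'b \<Rightarrow> 'b \<Rightarrow> 'b"
  bmul  :: "'b \<Rightarrow> 'b \<Rightarrow> 'b"
  bzero :: 'b
  bone  :: 'b

definition bipotent_semiring :: "'b bsr \<Rightarrow> bool" where
  "bipotent_semiring N \<longleftrightarrow>
     bzero N \<in> bcar N \<and> bone N \<in> bcar N \<and>
     (\<forall>a\<in>bcar N. \<forall>b\<in>bcar N. badd N a b \<in> bcar N \<and> bmul N a b \<in> bcar N) \<and>
     (\<forall>a\<in>bcar N. \<forall>b\<in>bcar N. \<forall>c\<in>bcar N. badd N (badd N a b) c = badd N a (badd N b c)) \<and>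
     (\<forall>a\<in>bcar N. \<forall>b\<in>bcar N. badd N a b = badd N b a) \<and>
     (\<forall>a\<in>bcar N. badd N (bzero N) a = a) \<and>
     (\<forall>a\<in>bcar N. \<forall>b\<in>bcar N. \<forall>c\<in>bcar N. bmul N (bmul N a b) c = bmul N a (bmul N b c)) \<and>
     (\<forall>a\<in>bcar N. \<forall>b\<in>bcar N. bmul N a b = bmul N b a) \<and>
     (\<forall>a\<in>bcar N. bmul N (bone N) a = a) \<and>
     (\<forall>a\<in>bcar N. bmul N (bzero N) a = bzero N) \<and>
     (\<forall>a\<in>bcar N. \<forall>b\<in>bcar N. \<forall>c\<in>bcar N. bmul N a (badd N b c) = badd N (bmul N a b) (bmul N a c)) \<and>
     (\<forall>a\<in>bcar N. \<forall>b\<in>bcar N. badd N a b = a \<or> badd N a b = b)"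

definition bless :: "'b bsr \<Rightarrow> 'b \<Rightarrow> 'b \<Rightarrow> bool" where
  "bless N a b \<longleftrightarrow> badd N a b = b \<and> a \<noteq> b"

definition ghost_hom :: "('a, 'c) stmon_scheme \<Rightarrow> 'b bsr \<Rightarrow> ('a \<Rightarrow> 'b) \<Rightarrow> bool" where
  "ghost_hom U N \<gamma> \<longleftrightarrow>
     (\<forall>x\<in>ghosts U. \<gamma> x \<in> bcar N) \<and>
     \<gamma> (szero U) = bzero N \<and> \<gamma> (se U) = bone N \<and>
     (\<forall>x\<in>ghosts U. \<forall>y\<in>ghosts U. \<gamma> (smul U x y) = bmul N (\<gamma> x) (\<gamma> y)) \<and>
     (\<forall>x\<in>ghosts U. \<forall>y\<in>ghosts U. \<gamma> (gmax U x y) = badd N (\<gamma> x) (\<gamma> y))"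

text \<open>The supertropical monoid structure on U/E making \<pi>_E a transmission:
  classes are multiplied via representatives, and the order on ghost classes is
  the image order.\<close>
definition quot :: "('a, 'c) stmon_scheme \<Rightarrow> ('a \<times> 'a) set \<Rightarrow> 'a set stmon" where
  "quot U E =
    \<lparr> car = car U // E,
      smul = (\<lambda>X Y. E `` {smul U (SOME x. x \<in> X) (SOME y. y \<in> Y)}),
      sone = E `` {sone U},
      szero = E `` {szero U},
      se = E `` {se U},
      sgle = (\<lambda>X Y. \<exists>x\<in>X. \<exists>y\<in>Y. x \<in> ghosts U \<and> y \<in> ghosts U \<and> sgle U x y) \<rparr>"

definition proj :: "('a \<times> 'a) set \<Rightarrow> 'a \<Rightarrow> 'a set" where
  "proj E x = E `` {x}"

definition Frel :: "('a, 'c) stmon_scheme \<Rightarrow> 'b bsr \<Rightarrow> ('a \<Rightarrow> 'b) \<Rightarrow> ('a \<times> 'a) set" where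
  "Frel U N \<gamma> = {(x, y). x \<in> car U \<and> y \<in> car U \<and>
     (x = y \<or> (x \<in> ghosts U \<and> y \<in> ghosts U \<and> \<gamma> x = \<gamma> y) \<or>
      (\<gamma> (smul U (se U) x) = bzero N \<and> \<gamma> (smul U (se U) y) = bzero N))}"

definition Dset :: "('a, 'c) stmon_scheme \<Rightarrow> 'a set" where
  "Dset V = ghosts V \<union>
     {smul V y z | y z. y \<in> car V \<and> z \<in> car V \<and>
        (\<exists>y'\<in>ghosts V. sgless V y' (smul V (se V) y) \<and>
           smul V y' z = smul V (smul V (se V) y) z)}"

definition Erel :: "('a, 'c) stmon_scheme \<Rightarrow> 'a set \<Rightarrow> ('a \<times> 'a) set" where
  "Erel V D = {(x, y). x \<in> car V \<and> y \<in> car V \<and>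
     (x = y \<or> (x \<in> D \<and> y \<in> D \<and> smul V (se V) x = smul V (se V) y))}"

definition hat :: "('a, 'c) stmon_scheme \<Rightarrow> 'a set stmon" where
  "hat V = quot V (Erel V (Dset V))"

definition sigma :: "('a, 'c) stmon_scheme \<Rightarrow> 'a \<Rightarrow> 'a set" where
  "sigma V = proj (Erel V (Dset V))"

definition alpha :: "('a, 'c) stmon_scheme \<Rightarrow> 'b bsr \<Rightarrow> ('a \<Rightarrow> 'b) \<Rightarrow> 'a \<Rightarrow> 'a set set" where
  "alpha U N \<gamma> = sigma (quot U (Frel U N \<gamma>)) \<circ> proj (Frel U N \<gamma>)"

definition DUgamma :: "('a, 'c) stmon_scheme \<Rightarrow> 'b bsr \<Rightarrow> ('a \<Rightarrow> 'b) \<Rightarrow> 'a set" where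
  "DUgamma U N \<gamma> = ghosts U \<union>
     {smul U y z | y z. y \<in> car U \<and> z \<in> car U \<and>
        (\<exists>y'\<in>ghosts U. bless N (\<gamma> y') (\<gamma> (smul U (se U) y)) \<and>
           \<gamma> (smul U y' z) = \<gamma> (smul U (smul U (se U) y) z))}"

end

theory Submission
  imports Defs
begin

text \<open>
  \<open>F(U,\<gamma>)\<close> identifies only ghosts with equal \<open>\<gamma>\<close>-value and the elements of the
  fibre \<open>\<gamma>(ex) = 0\<close>, and it is multiplicative. So the ghosts of \<open>V = U/F(U,\<gamma>)\<close>
  are the classes of ghosts of \<open>U\<close>, compared through \<open>\<gamma>\<close>, and off the zero fibre
  the class of \<open>x\<close> is an NC-product of \<open>V\<close> exactly when \<open>x\<close> is a ghost or a
  \<open>\<gamma>\<close>-NC-product of \<open>U\<close>. Pulling \<open>E(V,D(V))\<close> back along \<open>\<pi>\<^sub>F\<close> then gives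
  the stated relation.
\<close>

lemma equiv_Erel: "equiv (car V) (Erel V D)"
  by (rule equivI) (auto simp: Erel_def refl_on_def sym_def trans_def)

locale supertropical_ghost_hom =
  fixes U :: "'a stmon" and N :: "'b bsr" and \<gamma> :: "'a \<Rightarrow> 'b"
  assumes supertropical: "supertropical_monoid U"
    and bipotent: "bipotent_semiring N"
    and hom: "ghost_hom U N \<gamma>"
begin

abbreviation mul (infixl "\<odot>" 70) where "x \<odot> y \<equiv> smul U x y"
abbreviation e where "e \<equiv> se U"
abbreviation F where "F \<equiv> Frel U N \<gamma>"
abbreviation V where "V \<equiv> quot U F"

lemma mul_closed: "x \<in> car U \<Longrightarrow> y \<in> car U \<Longrightarrow> x \<odot> y \<in> car U"
  using supertropical unfolding supertropical_monoid_def by (elim conjE) blast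

lemma mul_assoc: "x \<in> car U \<Longrightarrow> y \<in> car U \<Longrightarrow> z \<in> car U \<Longrightarrow> x \<odot> y \<odot> z = x \<odot> (y \<odot> z)"
  using supertropical unfolding supertropical_monoid_def by (elim conjE) blast

lemma mul_comm: "x \<in> car U \<Longrightarrow> y \<in> car U \<Longrightarrow> x \<odot> y = y \<odot> x"
  using supertropical unfolding supertropical_monoid_def by (elim conjE) blast

lemma e_closed: "e \<in> car U"
  using supertropical unfolding supertropical_monoid_def by (elim conjE) blast

lemma e_idem: "e \<odot> e = e"
  using supertropical unfolding supertropical_monoid_def by (elim conjE) blast

lemma sgle_total: "a \<in> ghosts U \<Longrightarrow> b \<in> ghosts U \<Longrightarrow> sgle U a b \<or> sgle U b a"
  using supertropical unfolding supertropical_monoid_def by (elim conjE) blast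

lemma ghostsI: "x \<in> car U \<Longrightarrow> e \<odot> x \<in> ghosts U"
  unfolding ghosts_def by blast

lemma ghostsD:
  assumes "a \<in> ghosts U"
  shows "a \<in> car U" and "e \<odot> a = a"
proof -
  obtain x where x: "x \<in> car U" "a = e \<odot> x"
    using assms unfolding ghosts_def by blast
  then show "a \<in> car U" using mul_closed e_closed by simp
  show "e \<odot> a = a" using x e_idem e_closed mul_assoc[of e e x, symmetric] by simp
qed

lemma ghost_mul: "a \<in> ghosts U \<Longrightarrow> u \<in> car U \<Longrightarrow> a \<odot> u \<in> ghosts U"
  using ghostsI[of "a \<odot> u"] ghostsD[of a] mul_assoc[of e a u] mul_closed e_closed by simp

lemma e_mul_distrib:
  assumes "x \<in> car U" and "y \<in> car U"
  shows "e \<odot> (x \<odot> y) = (e \<odot> x) \<odot> (e \<odot> y)"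
proof -
  have "(e \<odot> x) \<odot> (e \<odot> y) = e \<odot> (x \<odot> e) \<odot> y"
    using assms e_closed mul_closed by (simp add: mul_assoc)
  also have "\<dots> = e \<odot> e \<odot> x \<odot> y"
    using assms e_closed mul_closed by (simp add: mul_comm[of x e] mul_assoc)
  finally show ?thesis
    using assms e_closed mul_closed by (simp add: e_idem mul_assoc)
qed

lemma gamma_closed: "a \<in> ghosts U \<Longrightarrow> \<gamma> a \<in> bcar N"
  using hom unfolding ghost_hom_def by blast

lemma gamma_mul: "a \<in> ghosts U \<Longrightarrow> b \<in> ghosts U \<Longrightarrow> \<gamma> (a \<odot> b) = bmul N (\<gamma> a) (\<gamma> b)"
  using hom unfolding ghost_hom_def by blast

lemma gamma_mono: "a \<in> ghosts U \<Longrightarrow> b \<in> ghosts U \<Longrightarrow> sgle U a b \<Longrightarrow> badd N (\<gamma> a) (\<gamma> b) = \<gamma> b"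
  using hom unfolding ghost_hom_def gmax_def by force

lemma gamma_e_mul:
  "x \<in> car U \<Longrightarrow> y \<in> car U \<Longrightarrow> \<gamma> (e \<odot> (x \<odot> y)) = bmul N (\<gamma> (e \<odot> x)) (\<gamma> (e \<odot> y))"
  by (simp add: e_mul_distrib gamma_mul ghostsI)

lemma bless_asym: "a \<in> bcar N \<Longrightarrow> b \<in> bcar N \<Longrightarrow> bless N a b \<Longrightarrow> badd N b a \<noteq> a"
  using bipotent unfolding bipotent_semiring_def bless_def by metis

lemma bzero_mul: "a \<in> bcar N \<Longrightarrow> bmul N (bzero N) a = bzero N"
  using bipotent unfolding bipotent_semiring_def by blast

lemma Frel_iff:
  assumes "x \<in> car U" and "y \<in> car U"
  shows "(x, y) \<in> F \<longleftrightarrow> x = y \<or> (x \<in> ghosts U \<and> y \<in> ghosts U \<and> \<gamma> (e \<odot> x) = \<gamma> (e \<odot> y))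
    \<or> (\<gamma> (e \<odot> x) = bzero N \<and> \<gamma> (e \<odot> y) = bzero N)"
  using assms ghostsD(2) unfolding Frel_def by auto

lemma Frel_gamma_eq: "(x, y) \<in> F \<Longrightarrow> \<gamma> (e \<odot> x) = \<gamma> (e \<odot> y)"
  unfolding Frel_def using ghostsD by auto

lemma equiv_Frel: "equiv (car U) F"
proof (rule equivI)
  show "F \<subseteq> car U \<times> car U" unfolding Frel_def by auto
  show "refl_on (car U) F" unfolding Frel_def refl_on_def by auto
  show "sym F" unfolding Frel_def sym_def by auto
  show "trans F"
  proof (rule transI)
    fix x y z assume xy: "(x, y) \<in> F" and yz: "(y, z) \<in> F"
    have "\<gamma> (e \<odot> x) = \<gamma> (e \<odot> y)" "\<gamma> (e \<odot> y) = \<gamma> (e \<odot> z)"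
      using Frel_gamma_eq xy yz by blast+
    with xy yz show "(x, z) \<in> F" unfolding Frel_def by (auto simp: ghostsD(2))
  qed
qed

lemma Frel_mul_right:
  assumes xx': "(x, x') \<in> F" and z: "z \<in> car U"
  shows "(x \<odot> z, x' \<odot> z) \<in> F"
proof -
  have x: "x \<in> car U" "x' \<in> car U" using xx' unfolding Frel_def by auto
  then have xz: "x \<odot> z \<in> car U" "x' \<odot> z \<in> car U" using mul_closed z by auto
  have gamma_eq: "\<gamma> (e \<odot> (x \<odot> z)) = \<gamma> (e \<odot> (x' \<odot> z))"
    using gamma_e_mul[OF x(1) z] gamma_e_mul[OF x(2) z] Frel_gamma_eq[OF xx'] by simp
  consider "x = x'" | "x \<in> ghosts U" "x' \<in> ghosts U" | "\<gamma> (e \<odot> x) = bzero N"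
    using xx' Frel_iff[OF x] by auto
  then show ?thesis
  proof cases
    case 1
    then show ?thesis using Frel_iff[OF xz] by simp
  next
    case 2
    then show ?thesis using Frel_iff[OF xz] ghost_mul z gamma_eq by simp
  next
    case 3
    then have "\<gamma> (e \<odot> (x \<odot> z)) = bzero N"
      using gamma_e_mul[OF x(1) z] bzero_mul gamma_closed ghostsI z by simp
    then show ?thesis using Frel_iff[OF xz] gamma_eq by simp
  qed
qed

lemma Frel_mul: "(x, x') \<in> F \<Longrightarrow> (y, y') \<in> F \<Longrightarrow> (x \<odot> y, x' \<odot> y') \<in> F"
proof -
  assume xx': "(x, x') \<in> F" and yy': "(y, y') \<in> F"
  have c: "x' \<in> car U" "y \<in> car U" "y' \<in> car U" using xx' yy' unfolding Frel_def by auto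
  have "(x \<odot> y, x' \<odot> y) \<in> F" using Frel_mul_right xx' c by simp
  moreover have "(x' \<odot> y, x' \<odot> y') \<in> F"
    using Frel_mul_right[OF yy' c(1)] mul_comm c by simp
  ultimately show ?thesis using equiv_Frel unfolding equiv_def trans_def by blast
qed

lemma Frel_e_iff:
  "x \<in> car U \<Longrightarrow> y \<in> car U \<Longrightarrow> (e \<odot> x, e \<odot> y) \<in> F \<longleftrightarrow> \<gamma> (e \<odot> x) = \<gamma> (e \<odot> y)"
  using Frel_gamma_eq ghostsI ghostsD unfolding Frel_def by (auto intro: ghostsD(1))

lemma class_in_quot: "x \<in> car U \<Longrightarrow> F``{x} \<in> car V"
  unfolding quot_def by (simp add: quotientI)

lemma class_eq_iff: "x \<in> car U \<Longrightarrow> y \<in> car U \<Longrightarrow> F``{x} = F``{y} \<longleftrightarrow> (x, y) \<in> F"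
  using eq_equiv_class_iff[OF equiv_Frel] by simp

lemma quot_mul_class:
  assumes x: "x \<in> car U" and y: "y \<in> car U"
  shows "smul V (F``{x}) (F``{y}) = F``{x \<odot> y}"
proof -
  define a where "a = (SOME a. a \<in> F``{x})"
  define b where "b = (SOME b. b \<in> F``{y})"
  have "a \<in> F``{x}" unfolding a_def using equiv_class_self[OF equiv_Frel x] by (rule someI)
  moreover have "b \<in> F``{y}" unfolding b_def using equiv_class_self[OF equiv_Frel y] by (rule someI)
  ultimately have "(x \<odot> y, a \<odot> b) \<in> F" using Frel_mul by simp
  then have "F``{a \<odot> b} = F``{x \<odot> y}" using equiv_class_eq[OF equiv_Frel] by simp
  then show ?thesis unfolding quot_def a_def b_def by simp
qed

lemma quot_e_mul_class: "x \<in> car U \<Longrightarrow> smul V (se V) (F``{x}) = F``{e \<odot> x}"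
  using quot_mul_class[OF e_closed] unfolding quot_def by simp

lemma ghost_class: "a \<in> ghosts U \<Longrightarrow> F``{a} \<in> ghosts V"
  using quot_e_mul_class[of a] class_in_quot[of a] ghostsD[of a]
  unfolding ghosts_def[of V] by force

lemma ghosts_quotE:
  assumes "X \<in> ghosts V"
  obtains a where "a \<in> ghosts U" and "X = F``{a}"
proof -
  obtain y where "y \<in> car U" and "X = smul V (se V) (F``{y})"
    using assms unfolding ghosts_def quot_def by (auto elim: quotientE)
  then show ?thesis using that quot_e_mul_class ghostsI by blast
qed

lemma quot_sgless_iff:
  assumes a: "a \<in> ghosts U" and b: "b \<in> ghosts U"
  shows "sgless V (F``{a}) (F``{b}) \<longleftrightarrow> bless N (\<gamma> a) (\<gamma> b)"
proof -
  have neq: "F``{a} \<noteq> F``{b} \<longleftrightarrow> \<gamma> a \<noteq> \<gamma> b"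
    using class_eq_iff Frel_e_iff a b ghostsD by metis
  have rep: "\<gamma> x = \<gamma> c" if "c \<in> ghosts U" "x \<in> F``{c}" "x \<in> ghosts U" for x c
    using Frel_gamma_eq[of c x] that ghostsD by auto
  show ?thesis
  proof
    assume "sgless V (F``{a}) (F``{b})"
    then obtain x y where "x \<in> F``{a}" "y \<in> F``{b}" "x \<in> ghosts U" "y \<in> ghosts U" "sgle U x y"
      and "F``{a} \<noteq> F``{b}"
      unfolding sgless_def quot_def by auto
    then show "bless N (\<gamma> a) (\<gamma> b)"
      using gamma_mono rep a b neq unfolding bless_def by metis
  next
    assume lt: "bless N (\<gamma> a) (\<gamma> b)"
    have "sgle U a b"
      using sgle_total[OF a b] gamma_mono[OF b a] bless_asym[OF gamma_closed[OF a] gamma_closed[OF b] lt]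
      by blast
    then show "sgless V (F``{a}) (F``{b})"
      using lt neq a b equiv_class_self[OF equiv_Frel] ghostsD
      unfolding sgless_def bless_def quot_def by auto
  qed
qed

lemma ghosts_subset_DUgamma: "ghosts U \<subseteq> DUgamma U N \<gamma>"
  unfolding DUgamma_def by blast

lemma class_in_Dset:
  assumes "x \<in> DUgamma U N \<gamma>"
  shows "F``{x} \<in> Dset V"
  using assms unfolding DUgamma_def
proof
  assume "x \<in> ghosts U"
  then show ?thesis using ghost_class unfolding Dset_def by blast
next
  assume "x \<in> {y \<odot> z |y z. y \<in> car U \<and> z \<in> car U \<and> (\<exists>y'\<in>ghosts U.
    bless N (\<gamma> y') (\<gamma> (e \<odot> y)) \<and> \<gamma> (y' \<odot> z) = \<gamma> (e \<odot> y \<odot> z))}"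
  then obtain y z y' where y: "y \<in> car U" and z: "z \<in> car U" and x: "x = y \<odot> z"
    and y': "y' \<in> ghosts U" and lt: "bless N (\<gamma> y') (\<gamma> (e \<odot> y))"
    and eq: "\<gamma> (y' \<odot> z) = \<gamma> (e \<odot> y \<odot> z)"
    by blast
  have ey: "e \<odot> y \<in> ghosts U" using ghostsI y .
  have "(y' \<odot> z, e \<odot> y \<odot> z) \<in> F"
    using Frel_iff ghost_mul[OF y' z] ghost_mul[OF ey z] eq ghostsD by simp
  then have "smul V (F``{y'}) (F``{z}) = smul V (smul V (se V) (F``{y})) (F``{z})"
    using quot_mul_class quot_e_mul_class class_eq_iff y z ey ghostsD(1)[OF y'] ghostsD(1)
      mul_closed by simp
  moreover have "sgless V (F``{y'}) (smul V (se V) (F``{y}))"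
    using quot_e_mul_class[OF y] quot_sgless_iff[OF y' ey] lt by simp
  ultimately show ?thesis
    unfolding Dset_def using x y z ghost_class[OF y'] class_in_quot quot_mul_class by blast
qed

lemma quot_NC_witness_gamma:
  assumes y: "y \<in> car U" and z: "z \<in> car U" and a: "a \<in> ghosts U"
    and lt: "sgless V (F``{a}) (smul V (se V) (F``{y}))"
    and eq: "smul V (F``{a}) (F``{z}) = smul V (smul V (se V) (F``{y})) (F``{z})"
  shows "bless N (\<gamma> a) (\<gamma> (e \<odot> y)) \<and> \<gamma> (a \<odot> z) = \<gamma> (e \<odot> y \<odot> z)"
proof
  have ey: "e \<odot> y \<in> ghosts U" using ghostsI y .
  show "bless N (\<gamma> a) (\<gamma> (e \<odot> y))"
    using lt quot_e_mul_class[OF y] quot_sgless_iff[OF a ey] by simp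
  have "F``{a \<odot> z} = F``{e \<odot> y \<odot> z}"
    using eq y z quot_mul_class quot_e_mul_class ghostsD(1)[OF a] ghostsD(1)[OF ey] by simp
  then have "(a \<odot> z, e \<odot> y \<odot> z) \<in> F"
    using class_eq_iff mul_closed ghostsD(1) a ey z by blast
  then show "\<gamma> (a \<odot> z) = \<gamma> (e \<odot> y \<odot> z)"
    using Frel_gamma_eq ghostsD(2) ghost_mul a ey z by metis
qed

lemma Frel_off_zero_fibre: "(x, w) \<in> F \<Longrightarrow> \<gamma> (e \<odot> x) \<noteq> bzero N \<Longrightarrow> x \<in> ghosts U \<or> x = w"
  unfolding Frel_def by auto

lemma DUgamma_of_class_in_Dset:
  assumes x: "x \<in> car U" and D: "F``{x} \<in> Dset V" and nz: "\<gamma> (e \<odot> x) \<noteq> bzero N"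
  shows "x \<in> DUgamma U N \<gamma>"
  using D unfolding Dset_def
proof
  assume "F``{x} \<in> ghosts V"
  then obtain a where "a \<in> ghosts U" and "F``{x} = F``{a}" by (rule ghosts_quotE)
  then show ?thesis
    using class_eq_iff Frel_off_zero_fibre ghosts_subset_DUgamma x nz ghostsD by blast
next
  assume "F``{x} \<in> {smul V Y Z |Y Z. Y \<in> car V \<and> Z \<in> car V \<and> (\<exists>Y'\<in>ghosts V.
    sgless V Y' (smul V (se V) Y) \<and> smul V Y' Z = smul V (smul V (se V) Y) Z)}"
  then obtain Y Z Y' where Y: "Y \<in> car V" and Z: "Z \<in> car V" and X: "F``{x} = smul V Y Z"
    and Y': "Y' \<in> ghosts V" and lt: "sgless V Y' (smul V (se V) Y)"
    and eq: "smul V Y' Z = smul V (smul V (se V) Y) Z"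
    by blast
  obtain y where y: "y \<in> car U" "Y = F``{y}" using Y unfolding quot_def by (auto elim: quotientE)
  obtain z where z: "z \<in> car U" "Z = F``{z}" using Z unfolding quot_def by (auto elim: quotientE)
  obtain a where a: "a \<in> ghosts U" "Y' = F``{a}" using Y' by (rule ghosts_quotE)
  have "bless N (\<gamma> a) (\<gamma> (e \<odot> y)) \<and> \<gamma> (a \<odot> z) = \<gamma> (e \<odot> y \<odot> z)"
    using quot_NC_witness_gamma[OF y(1) z(1) a(1)] lt eq a(2) y(2) z(2) by blast
  moreover have "x \<in> ghosts U \<or> x = y \<odot> z"
    using X y z quot_mul_class class_eq_iff x mul_closed Frel_off_zero_fibre nz by metis
  ultimately show ?thesis
    using ghosts_subset_DUgamma y(1) z(1) a(1) unfolding DUgamma_def by blast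
qed

lemma alpha_eq_iff_classes:
  assumes x1: "x1 \<in> car U" and x2: "x2 \<in> car U"
  shows "alpha U N \<gamma> x1 = alpha U N \<gamma> x2 \<longleftrightarrow> (x1, x2) \<in> F \<or>
    (F``{x1} \<in> Dset V \<and> F``{x2} \<in> Dset V \<and> \<gamma> (e \<odot> x1) = \<gamma> (e \<odot> x2))"
proof -
  have "alpha U N \<gamma> x1 = alpha U N \<gamma> x2 \<longleftrightarrow> (F``{x1}, F``{x2}) \<in> Erel V (Dset V)"
    unfolding alpha_def sigma_def proj_def comp_def
    using eq_equiv_class_iff[OF equiv_Erel class_in_quot[OF x1] class_in_quot[OF x2]] .
  also have "\<dots> \<longleftrightarrow> F``{x1} = F``{x2} \<or> (F``{x1} \<in> Dset V \<and> F``{x2} \<in> Dset V \<and>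
      smul V (se V) (F``{x1}) = smul V (se V) (F``{x2}))"
    using class_in_quot x1 x2 unfolding Erel_def by blast
  also have "smul V (se V) (F``{x1}) = smul V (se V) (F``{x2}) \<longleftrightarrow> \<gamma> (e \<odot> x1) = \<gamma> (e \<odot> x2)"
    using quot_e_mul_class class_eq_iff Frel_e_iff mul_closed e_closed x1 x2 by simp
  finally show ?thesis using class_eq_iff[OF x1 x2] by simp
qed

theorem alpha_eq_iff:
  assumes x1: "x1 \<in> car U" and x2: "x2 \<in> car U"
  shows "alpha U N \<gamma> x1 = alpha U N \<gamma> x2 \<longleftrightarrow>
           x1 = x2 \<or>
           (x1 \<in> DUgamma U N \<gamma> \<and> x2 \<in> DUgamma U N \<gamma> \<and> \<gamma> (e \<odot> x1) = \<gamma> (e \<odot> x2)) \<or>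
           (\<gamma> (e \<odot> x1) = bzero N \<and> \<gamma> (e \<odot> x2) = bzero N)"
proof (cases "\<gamma> (e \<odot> x1) = bzero N")
  case True
  then have "(x1, x2) \<in> F \<longleftrightarrow> x1 = x2 \<or> \<gamma> (e \<odot> x2) = bzero N"
    using Frel_iff[OF x1 x2] by auto
  with True show ?thesis using alpha_eq_iff_classes[OF x1 x2] by auto
next
  case False
  have D_iff: "x \<in> DUgamma U N \<gamma> \<longleftrightarrow> F``{x} \<in> Dset V"
    if "x \<in> car U" "\<gamma> (e \<odot> x) \<noteq> bzero N" for x
    using that class_in_Dset DUgamma_of_class_in_Dset by blast
  have "(x1, x2) \<in> F \<longleftrightarrow> x1 = x2 \<or> (x1 \<in> ghosts U \<and> x2 \<in> ghosts U \<and> \<gamma> (e \<odot> x1) = \<gamma> (e \<odot> x2))"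
    using Frel_iff[OF x1 x2] False by auto
  with False show ?thesis
    using alpha_eq_iff_classes[OF x1 x2] D_iff[OF x1] D_iff[OF x2] ghosts_subset_DUgamma
    by auto
qed

end

theorem corollary4p10:
  fixes U :: "'a stmon" and N :: "'b bsr" and \<gamma> :: "'a \<Rightarrow> 'b"
  assumes "supertropical_semiring U"
    and "bipotent_semiring N"
    and "ghost_hom U N \<gamma>"
    and "\<gamma> ` ghosts U = bcar N"
    and "x1 \<in> car U" and "x2 \<in> car U"
  shows "alpha U N \<gamma> x1 = alpha U N \<gamma> x2 \<longleftrightarrow>
           x1 = x2 \<or>
           (x1 \<in> DUgamma U N \<gamma> \<and> x2 \<in> DUgamma U N \<gamma> \<and>
              \<gamma> (smul U (se U) x1) = \<gamma> (smul U (se U) x2)) \<or>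
           (\<gamma> (smul U (se U) x1) = bzero N \<and> \<gamma> (smul U (se U) x2) = bzero N)"
proof -
  interpret supertropical_ghost_hom U N \<gamma>
    using assms(1-3) unfolding supertropical_semiring_def by unfold_locales auto
  show ?thesis using alpha_eq_iff assms(5,6) .
qed

end
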